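(* Let $(x,y)$ be a Nash equilibrium (possibly mixed) of the input $2\times2$ game, where player 1 plays row 0 with probability $x$ and player 2 plays column 0 with probability $y$. Then for every initial state $|\psi_{\mathrm{in}}\rangle$, the profile $\tau_1=(x,1-x,0,0)$, $\tau_2=(y,1-y,0,0)$ (i.e. each player uses only the actions $C\times\mathds{1}$, $C\times\sigma_x$ with the equilibrium probabilities) is a Nash equilibrium of the eMW game, and it yields the same payoffs as $(x,y)$ in the input game.
   Context: Input game: $2\times2$ bimatrix game with payoff pairs $(a_{ij},b_{ij})$, $i,j\in\{0,1\}$ (player 1 chooses $i$, player 2 chooses $j$). $\sigma_x=\begin{pmatrix}0&1\\1&0\end{pmatrix}$. eMW game: each player has pure strategies $C\times\mathds{1},C\times\sigma_x,Q\times\mathds{1},Q\times\sigma_x$; mixed strategies $\tau_1=(p_1,\dots,p_4)$, $\tau_2=(q_1,\dots,q_4)$ in this order. With $\rho_{\mathrm{in}}=|\psi_{\mathrm{in}}\rangle\langle\psi_{\mathrm{in}}|$, $\rho_{00}=|00\rangle\langle00|$, the final state is $\rho_{\mathrm{ext}}=[(p_1q_1+p_1q_3+p_3q_1)\rho_{00}+p_3q_3\rho_{\mathrm{in}}]+(\mathds{1}\otimes\sigma_x)[(p_1q_2+p_1q_4+p_3q_2)\rho_{00}+p_3q_4\rho_{\mathrm{in}}](\mathds{1}\otimes\sigma_x)+(\sigma_x\otimes\mathds{1})[(p_2q_1+p_2q_3+p_4q_1)\rho_{00}+p_4q_3\rho_{\mathrm{in}}](\sigma_x\otimes\mathds{1})+(\sigma_x\otimes\sigma_x)[(p_2q_2+p_2q_4+p_4q_2)\rho_{00}+p_4q_4\rho_{\mathrm{in}}](\sigma_x\otimes\sigma_x)$,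 and the payoff pair is $\mathrm{tr}(X\rho_{\mathrm{ext}})$ with $X=\sum_{ij}(a_{ij},b_{ij})|ij\rangle\langle ij|$ (first component to player 1, second to player 2). Nash equilibrium is in the usual sense for mixed strategies. *)

theory Defs
  imports "Jordan_Normal_Form.Matrix"
begin

text \<open>Two-qubit Hilbert space C^4 with computational basis |ij>, i,j in {0,1},
  indexed by 2*i + j. Matrices are Jordan_Normal_Form matrices over complex.\<close>

definition sigma_x :: "complex mat" where
  "sigma_x = mat 2 2 (\<lambda>(i,j). if i \<noteq> j then 1 else 0)"

definition kron2 :: "complex mat \<Rightarrow> complex mat \<Rightarrow> complex mat" where
  "kron2 A B = mat 4 4 (\<lambda>(r,c). A $$ (r div 2, c div 2) * B $$ (r mod 2, c mod 2))"

definition ket_proj :: "nat \<Rightarrow> complex mat" where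
  "ket_proj k = mat 4 4 (\<lambda>(r,c). if r = k \<and> c = k then 1 else 0)"

definition rho00 :: "complex mat" where
  "rho00 = ket_proj 0"

definition proj_of :: "complex vec \<Rightarrow> complex mat" where
  "proj_of psi = mat 4 4 (\<lambda>(r,c). psi $ r * cnj (psi $ c))"

definition unit_state :: "complex vec \<Rightarrow> bool" where
  "unit_state psi \<longleftrightarrow> dim_vec psi = 4 \<and> (\<Sum>k<4. (cmod (psi $ k))\<^sup>2) = 1"

text \<open>Conjugation by a unitary U: U rho U^dagger (here all U are real symmetric involutions).\<close>
definition conjU :: "complex mat \<Rightarrow> complex mat \<Rightarrow> complex mat" where
  "conjU U R = U * R * U"

text \<open>Mixed strategies in the eMW game: p 0..p 3 are the probabilities of
  C x 1, C x sigma_x, Q x 1, Q x sigma_x (i.e. p_1..p_4 of the paper).\<close>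
definition mixed4 :: "(nat \<Rightarrow> real) \<Rightarrow> bool" where
  "mixed4 p \<longleftrightarrow> (\<forall>k<4. 0 \<le> p k) \<and> (\<Sum>k<4. p k) = 1"

definition rho_ext :: "complex mat \<Rightarrow> (nat \<Rightarrow> real) \<Rightarrow> (nat \<Rightarrow> real) \<Rightarrow> complex mat" where
  "rho_ext rin p q =
     (complex_of_real (p 0 * q 0 + p 0 * q 2 + p 2 * q 0) \<cdot>\<^sub>m rho00
        + complex_of_real (p 2 * q 2) \<cdot>\<^sub>m rin)
   + conjU (kron2 (1\<^sub>m 2) sigma_x)
       (complex_of_real (p 0 * q 1 + p 0 * q 3 + p 2 * q 1) \<cdot>\<^sub>m rho00
        + complex_of_real (p 2 * q 3) \<cdot>\<^sub>m rin)
   + conjU (kron2 sigma_x (1\<^sub>m 2))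
       (complex_of_real (p 1 * q 0 + p 1 * q 2 + p 3 * q 0) \<cdot>\<^sub>m rho00
        + complex_of_real (p 3 * q 2) \<cdot>\<^sub>m rin)
   + conjU (kron2 sigma_x sigma_x)
       (complex_of_real (p 1 * q 1 + p 1 * q 3 + p 3 * q 1) \<cdot>\<^sub>m rho00
        + complex_of_real (p 3 * q 3) \<cdot>\<^sub>m rin)"

definition mtrace :: "complex mat \<Rightarrow> complex" where
  "mtrace A = (\<Sum>i<dim_row A. A $$ (i,i))"

definition payoff_op :: "(nat \<Rightarrow> nat \<Rightarrow> real) \<Rightarrow> complex mat" where
  "payoff_op c = mat 4 4 (\<lambda>(r,s). if r = s then complex_of_real (c (r div 2) (r mod 2)) else 0)"

text \<open>Payoff tr(X rho); it is real since rho is Hermitian, we take the real part.\<close>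
definition emw_payoff :: "(nat \<Rightarrow> nat \<Rightarrow> real) \<Rightarrow> complex vec \<Rightarrow> (nat \<Rightarrow> real) \<Rightarrow> (nat \<Rightarrow> real) \<Rightarrow> real" where
  "emw_payoff c psi p q = Re (mtrace (payoff_op c * rho_ext (proj_of psi) p q))"

definition emw_nash :: "(nat \<Rightarrow> nat \<Rightarrow> real) \<Rightarrow> (nat \<Rightarrow> nat \<Rightarrow> real) \<Rightarrow> complex vec
                        \<Rightarrow> (nat \<Rightarrow> real) \<Rightarrow> (nat \<Rightarrow> real) \<Rightarrow> bool" where
  "emw_nash a b psi p q \<longleftrightarrow> mixed4 p \<and> mixed4 q \<and>
     (\<forall>p'. mixed4 p' \<longrightarrow> emw_payoff a psi p' q \<le> emw_payoff a psi p q) \<and>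
     (\<forall>q'. mixed4 q' \<longrightarrow> emw_payoff b psi p q' \<le> emw_payoff b psi p q)"

definition prob2 :: "real \<Rightarrow> nat \<Rightarrow> real" where
  "prob2 x i = (if i = 0 then x else 1 - x)"

definition input_payoff :: "(nat \<Rightarrow> nat \<Rightarrow> real) \<Rightarrow> real \<Rightarrow> real \<Rightarrow> real" where
  "input_payoff c x y = (\<Sum>i<2. \<Sum>j<2. prob2 x i * prob2 y j * c i j)"

definition input_nash :: "(nat \<Rightarrow> nat \<Rightarrow> real) \<Rightarrow> (nat \<Rightarrow> nat \<Rightarrow> real) \<Rightarrow> real \<Rightarrow> real \<Rightarrow> bool" where
  "input_nash a b x y \<longleftrightarrow> 0 \<le> x \<and> x \<le> 1 \<and> 0 \<le> y \<and> y \<le> 1 \<and>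
     (\<forall>x'. 0 \<le> x' \<and> x' \<le> 1 \<longrightarrow> input_payoff a x' y \<le> input_payoff a x y) \<and>
     (\<forall>y'. 0 \<le> y' \<and> y' \<le> 1 \<longrightarrow> input_payoff b x y' \<le> input_payoff b x y)"

definition classical_profile :: "real \<Rightarrow> nat \<Rightarrow> real" where
  "classical_profile x k = (if k = 0 then x else if k = 1 then 1 - x else 0)"

end

theory Submission
  imports Defs
begin

(* The three unitaries 1 (x) sigma_x, sigma_x (x) 1 and sigma_x (x) sigma_x of the
   eMW game are permutation matrices of involutions of the computational basis |ab>, so
   conjugating a density matrix by them just permutes its diagonal.  The payoff operator X is
   diagonal, hence tr(X rho_ext) depends only on the diagonal of rho_ext, which we compute in
   closed form.  In that formula the initial state rho_in only enters with weights p_3 q_3,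
   p_3 q_4, p_4 q_3, p_4 q_4.  Consequently, if one player uses only the classical actions
   C x 1 and C x sigma_x, the other player's actions Q x 1 and Q x sigma_x act exactly like
   C x 1 and C x sigma_x, and the eMW payoff equals the input-game payoff at the marginal
   probabilities (lemmas emw_payoff_one_classical and emw_payoff_marginal).  Any profitable
   deviation in the eMW game would therefore be a profitable deviation in the input game,
   which proves the theorem. *)

definition perm_matrix :: "nat \<Rightarrow> (nat \<Rightarrow> nat) \<Rightarrow> 'a::{zero,one} mat \<Rightarrow> bool" where
  "perm_matrix n f U \<longleftrightarrow>
     U \<in> carrier_mat n n \<and> (\<forall>i<n. \<forall>j<n. U $$ (i,j) = (if j = f i then 1 else 0))"

definition involution_on :: "nat \<Rightarrow> (nat \<Rightarrow> nat) \<Rightarrow> bool" where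
  "involution_on n f \<longleftrightarrow> (\<forall>i<n. f i < n \<and> f (f i) = i)"

lemma perm_matrix_mult_left:
  fixes R :: "'a::comm_ring_1 mat"
  assumes U: "perm_matrix n f U" and fi: "f i < n"
    and R: "R \<in> carrier_mat n m" and i: "i < n" and k: "k < m"
  shows "(U * R) $$ (i,k) = R $$ (f i, k)"
proof -
  have Uc: "U \<in> carrier_mat n n" using U by (simp add: perm_matrix_def)
  have "(U * R) $$ (i,k) = (\<Sum>j\<in>{0..<n}. U $$ (i,j) * R $$ (j,k))"
    using Uc R i k by (simp add: scalar_prod_def)
  also have "\<dots> = (\<Sum>j\<in>{0..<n}. if j = f i then R $$ (j,k) else 0)"
    using U i by (intro sum.cong) (auto simp: perm_matrix_def)
  also have "\<dots> = R $$ (f i, k)"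
    using fi by simp
  finally show ?thesis .
qed

lemma perm_matrix_mult_right:
  fixes R :: "'a::comm_ring_1 mat"
  assumes U: "perm_matrix n f U" and f: "involution_on n f"
    and R: "R \<in> carrier_mat m n" and k: "k < m" and i: "i < n"
  shows "(R * U) $$ (k,i) = R $$ (k, f i)"
proof -
  have Uc: "U \<in> carrier_mat n n" using U by (simp add: perm_matrix_def)
  have "(R * U) $$ (k,i) = (\<Sum>j\<in>{0..<n}. R $$ (k,j) * U $$ (j,i))"
    using Uc R i k by (simp add: scalar_prod_def)
  also have "\<dots> = (\<Sum>j\<in>{0..<n}. if j = f i then R $$ (k,j) else 0)"
    using U f i by (intro sum.cong) (auto simp: perm_matrix_def involution_on_def)
  also have "\<dots> = R $$ (k, f i)"
    using f i by (simp add: involution_on_def)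
  finally show ?thesis .
qed

lemma conjU_diag:
  assumes U: "perm_matrix n f U" and f: "involution_on n f"
    and R: "R \<in> carrier_mat n n" and i: "i < n"
  shows "conjU U R $$ (i,i) = R $$ (f i, f i)"
proof -
  have UR: "U * R \<in> carrier_mat n n"
    using U R unfolding perm_matrix_def by (metis mult_carrier_mat)
  have "conjU U R $$ (i,i) = (U * R) $$ (i, f i)"
    unfolding conjU_def using perm_matrix_mult_right[OF U f UR i i] .
  also have "\<dots> = R $$ (f i, f i)"
    using f i perm_matrix_mult_left[OF U _ R i] by (simp add: involution_on_def)
  finally show ?thesis .
qed

definition flip :: "nat \<Rightarrow> nat" where
  "flip i = 1 - i"

definition kron_perm :: "(nat \<Rightarrow> nat) \<Rightarrow> (nat \<Rightarrow> nat) \<Rightarrow> nat \<Rightarrow> nat" where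
  "kron_perm g h r = 2 * g (r div 2) + h (r mod 2)"

lemma perm_matrix_one: "perm_matrix n id (1\<^sub>m n)"
  by (simp add: perm_matrix_def)

lemma perm_matrix_sigma_x: "perm_matrix 2 flip sigma_x"
  by (auto simp: perm_matrix_def sigma_x_def flip_def; arith)

lemma involution_on_id: "involution_on n id"
  by (simp add: involution_on_def)

lemma involution_on_flip: "involution_on 2 flip"
  by (auto simp: involution_on_def flip_def)

lemma perm_matrix_kron2:
  assumes A: "perm_matrix 2 g A" and B: "perm_matrix 2 h B"
    and g: "involution_on 2 g" and h: "involution_on 2 h"
  shows "perm_matrix 4 (kron_perm g h) (kron2 A B)"
  unfolding perm_matrix_def
proof (intro conjI allI impI)
  show "kron2 A B \<in> carrier_mat 4 4" by (simp add: kron2_def)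
  fix r c :: nat assume r: "r < 4" and c: "c < 4"
  have g2: "g (r div 2) < 2" and h2: "h (r mod 2) < 2"
    using g h r by (auto simp: involution_on_def)
  have "c = kron_perm g h r \<longleftrightarrow> c div 2 = g (r div 2) \<and> c mod 2 = h (r mod 2)"
    using g2 h2 unfolding kron_perm_def by (auto; presburger)
  moreover have "kron2 A B $$ (r,c) = A $$ (r div 2, c div 2) * B $$ (r mod 2, c mod 2)"
    using r c by (simp add: kron2_def)
  ultimately show "kron2 A B $$ (r,c) = (if c = kron_perm g h r then 1 else 0)"
    using A B r c by (simp add: perm_matrix_def)
qed

lemma involution_on_kron_perm:
  assumes g: "involution_on 2 g" and h: "involution_on 2 h"
  shows "involution_on 4 (kron_perm g h)"
  unfolding involution_on_def
proof (intro allI impI)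
  fix r :: nat assume r: "r < 4"
  have g2: "g (r div 2) < 2" "g (g (r div 2)) = r div 2"
    and h2: "h (r mod 2) < 2" "h (h (r mod 2)) = r mod 2"
    using g h r by (auto simp: involution_on_def)
  then show "kron_perm g h r < 4 \<and> kron_perm g h (kron_perm g h r) = r"
    unfolding kron_perm_def by auto
qed

definition mix_state :: "complex mat \<Rightarrow> real \<Rightarrow> real \<Rightarrow> complex mat" where
  "mix_state rin u v = complex_of_real u \<cdot>\<^sub>m rho00 + complex_of_real v \<cdot>\<^sub>m rin"

lemma rho_ext_mix_state:
  "rho_ext rin p q =
     mix_state rin (p 0 * q 0 + p 0 * q 2 + p 2 * q 0) (p 2 * q 2)
   + conjU (kron2 (1\<^sub>m 2) sigma_x) (mix_state rin (p 0 * q 1 + p 0 * q 3 + p 2 * q 1) (p 2 * q 3))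
   + conjU (kron2 sigma_x (1\<^sub>m 2)) (mix_state rin (p 1 * q 0 + p 1 * q 2 + p 3 * q 0) (p 3 * q 2))
   + conjU (kron2 sigma_x sigma_x) (mix_state rin (p 1 * q 1 + p 1 * q 3 + p 3 * q 1) (p 3 * q 3))"
  by (simp add: rho_ext_def mix_state_def)

lemma rho00_carrier: "rho00 \<in> carrier_mat 4 4"
  by (simp add: rho00_def ket_proj_def)

lemma rho00_diag: "k < 4 \<Longrightarrow> rho00 $$ (k,k) = (if k = 0 then 1 else 0)"
  by (simp add: rho00_def ket_proj_def)

lemma mix_state_carrier: "rin \<in> carrier_mat 4 4 \<Longrightarrow> mix_state rin u v \<in> carrier_mat 4 4"
  by (simp add: mix_state_def rho00_carrier)

lemma mix_state_diag:
  "rin \<in> carrier_mat 4 4 \<Longrightarrow> k < 4 \<Longrightarrow>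
   mix_state rin u v $$ (k,k) = complex_of_real u * rho00 $$ (k,k) + complex_of_real v * rin $$ (k,k)"
  by (simp add: mix_state_def rho00_def ket_proj_def)

lemma perm_matrices_eMW:
  "perm_matrix 4 (kron_perm id flip) (kron2 (1\<^sub>m 2) sigma_x)"
  "perm_matrix 4 (kron_perm flip id) (kron2 sigma_x (1\<^sub>m 2))"
  "perm_matrix 4 (kron_perm flip flip) (kron2 sigma_x sigma_x)"
  by (intro perm_matrix_kron2 perm_matrix_one perm_matrix_sigma_x
        involution_on_id involution_on_flip)+

lemma involutions_eMW:
  "involution_on 4 (kron_perm id flip)"
  "involution_on 4 (kron_perm flip id)"
  "involution_on 4 (kron_perm flip flip)"
  by (intro involution_on_kron_perm involution_on_id involution_on_flip)+

lemma rho_ext_diag: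
  assumes rin: "rin \<in> carrier_mat 4 4" and i: "i < 4"
  shows "rho_ext rin p q $$ (i,i) =
     mix_state rin (p 0 * q 0 + p 0 * q 2 + p 2 * q 0) (p 2 * q 2) $$ (i, i)
   + mix_state rin (p 0 * q 1 + p 0 * q 3 + p 2 * q 1) (p 2 * q 3)
       $$ (kron_perm id flip i, kron_perm id flip i)
   + mix_state rin (p 1 * q 0 + p 1 * q 2 + p 3 * q 0) (p 3 * q 2)
       $$ (kron_perm flip id i, kron_perm flip id i)
   + mix_state rin (p 1 * q 1 + p 1 * q 3 + p 3 * q 1) (p 3 * q 3)
       $$ (kron_perm flip flip i, kron_perm flip flip i)"
proof -
  have M: "\<And>u v. mix_state rin u v \<in> carrier_mat 4 4"
    using rin by (rule mix_state_carrier)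
  have C: "perm_matrix 4 f U \<Longrightarrow> conjU U (mix_state rin u v) \<in> carrier_mat 4 4"
    for f U u v using M by (auto simp: conjU_def perm_matrix_def)
  show ?thesis
    unfolding rho_ext_mix_state
    using i carrier_matD[OF M] carrier_matD[OF C[OF perm_matrices_eMW(1)]]
      carrier_matD[OF C[OF perm_matrices_eMW(2)]] carrier_matD[OF C[OF perm_matrices_eMW(3)]]
      conjU_diag[OF perm_matrices_eMW(1) involutions_eMW(1) M i]
      conjU_diag[OF perm_matrices_eMW(2) involutions_eMW(2) M i]
      conjU_diag[OF perm_matrices_eMW(3) involutions_eMW(3) M i]
    by simp
qed

lemma proj_of_carrier: "proj_of psi \<in> carrier_mat 4 4"
  by (simp add: proj_of_def)

lemma rho_ext_carrier: "rin \<in> carrier_mat 4 4 \<Longrightarrow> rho_ext rin p q \<in> carrier_mat 4 4"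
  unfolding rho_ext_mix_state conjU_def
  by (intro add_carrier_mat mult_carrier_mat mix_state_carrier) (auto simp: kron2_def mix_state_carrier)

lemma trace_payoff_op:
  assumes M: "M \<in> carrier_mat 4 4"
  shows "mtrace (payoff_op c * M) = (\<Sum>i<4. complex_of_real (c (i div 2) (i mod 2)) * M $$ (i,i))"
proof -
  have "(payoff_op c * M) $$ (i,i) = complex_of_real (c (i div 2) (i mod 2)) * M $$ (i,i)"
    if i: "i < 4" for i
  proof -
    have "(payoff_op c * M) $$ (i,i) = (\<Sum>j\<in>{0..<4}. payoff_op c $$ (i,j) * M $$ (j,i))"
      using M i by (simp add: payoff_op_def scalar_prod_def)
    also have "\<dots> = (\<Sum>j\<in>{0..<4}. if j = i then complex_of_real (c (i div 2) (i mod 2)) * M $$ (i,i) else 0)"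
      by (intro sum.cong) (auto simp: payoff_op_def i)
    finally show ?thesis using i by simp
  qed
  then show ?thesis
    using M unfolding mtrace_def by (simp add: payoff_op_def)
qed

lemma emw_payoff_diag:
  "emw_payoff c psi p q = (\<Sum>i<4. c (i div 2) (i mod 2) * Re (rho_ext (proj_of psi) p q $$ (i,i)))"
  unfolding emw_payoff_def trace_payoff_op[OF rho_ext_carrier[OF proj_of_carrier]]
  by (simp add: Re_sum)

text \<open>The key computation: when one of the players uses only the classical actions, the
  initial state drops out and every eMW action acts as the classical action it contains
  (\<open>C \<times> U\<close> and \<open>Q \<times> U\<close> both as \<open>U\<close>).\<close>
lemma emw_payoff_one_classical:
  assumes "(p 2 = 0 \<and> p 3 = 0) \<or> (q 2 = 0 \<and> q 3 = 0)"
  shows "emw_payoff c psi p q = (\<Sum>i<2. \<Sum>j<2. (p i + p (i + 2)) * (q j + q (j + 2)) * c i j)"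
proof -
  have sum4: "(\<Sum>i<(4::nat). f i) = f 0 + f 1 + f 2 + (f 3 :: real)" for f
    by (simp add: eval_nat_numeral)
  have sum2: "(\<Sum>i<(2::nat). f i) = f 0 + (f 1 :: real)" for f
    by (simp add: eval_nat_numeral)
  have perms:
    "kron_perm id flip 0 = 1" "kron_perm id flip 1 = 0"
    "kron_perm id flip 2 = 3" "kron_perm id flip 3 = 2"
    "kron_perm flip id 0 = 2" "kron_perm flip id 1 = 3"
    "kron_perm flip id 2 = 0" "kron_perm flip id 3 = 1"
    "kron_perm flip flip 0 = 3" "kron_perm flip flip 1 = 2"
    "kron_perm flip flip 2 = 1" "kron_perm flip flip 3 = 0"
    by (simp_all add: kron_perm_def flip_def)
  have "(\<Sum>i<2. \<Sum>j<2. (p i + p (i + 2)) * (q j + q (j + 2)) * c i j) =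
      (p 0 + p 2) * (q 0 + q 2) * c 0 0 + (p 0 + p 2) * (q 1 + q 3) * c 0 1
    + (p 1 + p 3) * (q 0 + q 2) * c 1 0 + (p 1 + p 3) * (q 1 + q 3) * c 1 1"
    by (simp add: sum2 eval_nat_numeral)
  then show ?thesis
    unfolding emw_payoff_diag sum4
    using assms
    by (auto simp: rho_ext_diag[OF proj_of_carrier] mix_state_diag[OF proj_of_carrier]
        rho00_diag perms[unfolded One_nat_def] algebra_simps)
qed

lemma mixed4_sum: "mixed4 p \<Longrightarrow> p 0 + p 1 + p 2 + p 3 = 1"
  by (simp add: mixed4_def eval_nat_numeral add.assoc)

lemma mixed4_nonneg: "mixed4 p \<Longrightarrow> k < 4 \<Longrightarrow> 0 \<le> p k"
  by (simp add: mixed4_def)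

lemma prob2_marginal:
  assumes "mixed4 p" and "i < 2"
  shows "prob2 (p 0 + p 2) i = p i + p (i + 2)"
proof -
  from \<open>i < 2\<close> consider "i = 0" | "i = 1" by linarith
  then show ?thesis
    using mixed4_sum[OF assms(1)] by cases (simp_all add: prob2_def eval_nat_numeral)
qed

lemma marginal_bounds:
  assumes "mixed4 p"
  shows "0 \<le> p 0 + p 2" and "p 0 + p 2 \<le> 1"
  using mixed4_sum[OF assms] mixed4_nonneg[OF assms, of 0] mixed4_nonneg[OF assms, of 1]
    mixed4_nonneg[OF assms, of 2] mixed4_nonneg[OF assms, of 3]
  by simp_all

lemma emw_payoff_marginal:
  assumes p: "mixed4 p" and q: "mixed4 q"
    and classical: "(p 2 = 0 \<and> p 3 = 0) \<or> (q 2 = 0 \<and> q 3 = 0)"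
  shows "emw_payoff c psi p q = input_payoff c (p 0 + p 2) (q 0 + q 2)"
  unfolding emw_payoff_one_classical[OF classical] input_payoff_def
  by (intro sum.cong refl) (simp add: prob2_marginal[OF p] prob2_marginal[OF q])

lemma mixed4_classical_profile:
  "0 \<le> x \<Longrightarrow> x \<le> 1 \<Longrightarrow> mixed4 (classical_profile x)"
  by (auto simp: mixed4_def classical_profile_def eval_nat_numeral)

lemma classical_profile_values:
  "classical_profile x 0 = x" "classical_profile x 2 = 0" "classical_profile x 3 = 0"
  by (simp_all add: classical_profile_def)

theorem mainTheorem4:
  fixes a b :: "nat \<Rightarrow> nat \<Rightarrow> real" and x y :: real and psi :: "complex vec"
  assumes "input_nash a b x y"
    and "unit_state psi"
  shows "emw_nash a b psi (classical_profile x) (classical_profile y)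
       \<and> emw_payoff a psi (classical_profile x) (classical_profile y) = input_payoff a x y
       \<and> emw_payoff b psi (classical_profile x) (classical_profile y) = input_payoff b x y"
proof -
  let ?cx = "classical_profile x" and ?cy = "classical_profile y"
  have x: "0 \<le> x" "x \<le> 1" and y: "0 \<le> y" "y \<le> 1"
    and best_a: "\<And>x'. 0 \<le> x' \<Longrightarrow> x' \<le> 1 \<Longrightarrow> input_payoff a x' y \<le> input_payoff a x y"
    and best_b: "\<And>y'. 0 \<le> y' \<Longrightarrow> y' \<le> 1 \<Longrightarrow> input_payoff b x y' \<le> input_payoff b x y"
    using assms(1) unfolding input_nash_def by auto
  have mx: "mixed4 ?cx" and my: "mixed4 ?cy"
    using x y by (simp_all add: mixed4_classical_profile)
  have vs_cy: "emw_payoff c psi p ?cy = input_payoff c (p 0 + p 2) y" if "mixed4 p" for c p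
    using emw_payoff_marginal[OF that my] by (simp add: classical_profile_values)
  have vs_cx: "emw_payoff c psi ?cx q = input_payoff c x (q 0 + q 2)" if "mixed4 q" for c q
    using emw_payoff_marginal[OF mx that] by (simp add: classical_profile_values)
  have pay: "emw_payoff c psi ?cx ?cy = input_payoff c x y" for c
    using vs_cy[OF mx] by (simp add: classical_profile_values)
  have "emw_payoff a psi p' ?cy \<le> emw_payoff a psi ?cx ?cy" if "mixed4 p'" for p'
    using best_a[OF marginal_bounds[OF that]] by (simp add: vs_cy[OF that] pay)
  moreover have "emw_payoff b psi ?cx q' \<le> emw_payoff b psi ?cx ?cy" if "mixed4 q'" for q'
    using best_b[OF marginal_bounds[OF that]] by (simp add: vs_cx[OF that] pay)
  ultimately show ?thesis
    unfolding emw_nash_def using mx my pay by blast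
qed

end
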